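(* Let $m\ge2$ and let $X_{2m}\subset\mathbb{R}^2$ be a regular polygon with $2m$ vertices centered at the origin, with circumradius $a_{2m}$ (half the length of its longest diagonal) satisfying $\sin\!\left(\frac{\pi-\frac{2\pi}{2m}}{2}\right)=\frac{1}{a_{2m}^2}$, i.e. $a_{2m}^2\cos(\pi/(2m))=1$. Then the dual Wulff shape $\mathcal{D}X_{2m}$ is not equal to $X_{2m}$, but $\mathcal{D}X_{2m}$ is congruent to $X_{2m}$. (For $m=2$: a square centered at the origin with $a_4^2=\sqrt2$, edge length $2/a_4$, has dual Wulff shape a different square centered at the origin with the same edge length.)
   Context: Every convex body $W\subset\mathbb{R}^{2}$ with the origin in its interior is a Wulff shape $\mathcal{W}_\gamma=\bigcap_{\theta\in S^1}\{x: x\cdot\theta\le\gamma(\theta)\}$ for some continuous $\gamma:S^1\to\mathbb{R}_+$. With $w(\theta)\theta$ the unique point of $\partial W$ on the ray $\{r\theta:r>0\}$, the dual Wulff shape is $\mathcal{D}W=\mathcal{W}_{\overline\gamma}$ with $\overline\gamma(\theta)=1/w(-\theta)$. *)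

theory Defs
  imports "HOL-Analysis.Analysis"
begin

definition pt :: "real \<Rightarrow> real \<Rightarrow> real^2" where
  "pt x y = vector [x, y]"

definition wulff_shape :: "(real^2 \<Rightarrow> real) \<Rightarrow> (real^2) set" where
  "wulff_shape \<gamma> = (\<Inter>\<theta>\<in>sphere 0 1. {x. x \<bullet> \<theta> \<le> \<gamma> \<theta>})"

definition radial_fun :: "(real^2) set \<Rightarrow> real^2 \<Rightarrow> real" where
  "radial_fun W \<theta> = (THE r. r > 0 \<and> r *\<^sub>R \<theta> \<in> frontier W)"

definition dual_wulff :: "(real^2) set \<Rightarrow> (real^2) set" where
  "dual_wulff W = wulff_shape (\<lambda>\<theta>. 1 / radial_fun W (- \<theta>))"

definition congruent :: "(real^2) set \<Rightarrow> (real^2) set \<Rightarrow> bool" where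
  "congruent A B \<longleftrightarrow> (\<exists>f. (\<forall>x y. dist (f x) (f y) = dist x y) \<and> f ` A = B)"

definition regular_polygon :: "nat \<Rightarrow> real \<Rightarrow> real \<Rightarrow> (real^2) set" where
  "regular_polygon n a t0 =
     convex hull {pt (a * cos (t0 + 2 * pi * real k / real n)) (a * sin (t0 + 2 * pi * real k / real n)) | k. k < n}"

end

theory Submission
  imports Defs
begin

text \<open>For a convex body \<open>S\<close> with the origin in its interior, \<open>\<D>S\<close> is the polar body of \<open>-S\<close>.
  The regular \<open>2m\<close>-gon \<open>X\<close> is centrally symmetric, so \<open>\<D>X\<close> is cut out by the half-planes
  \<open>x \<bullet> v \<le> 1\<close>, one for each vertex \<open>v\<close>. A regular \<open>2m\<close>-gon of circumradius \<open>b\<close> is in turn the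
  intersection of the half-planes \<open>x \<bullet> u \<le> b cos (\<pi>/2m)\<close> whose unit normals \<open>u\<close> point at the
  edge midpoints. Hence \<open>\<D>X\<close> is the regular \<open>2m\<close>-gon of circumradius \<open>1 / (a cos (\<pi>/2m))\<close>
  turned by \<open>\<pi>/2m\<close> against \<open>X\<close>. The normalisation \<open>a\<^sup>2 cos (\<pi>/2m) = 1\<close> makes this circumradius
  equal to \<open>a\<close>, so \<open>\<D>X\<close> is a rotated copy of \<open>X\<close>; it is not \<open>X\<close> itself, because a vertex \<open>v\<close> of \<open>X\<close>
  has \<open>v \<bullet> v = a\<^sup>2 > 1\<close>.\<close>

lemma pt_nth [simp]: "pt x y $ 1 = x" "pt x y $ 2 = y"
  by (simp_all add: pt_def)

lemma inner_vec2: "(x::real^2) \<bullet> y = x$1 * y$1 + x$2 * y$2"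
  by (simp add: inner_vec_def sum_2)

lemma vec2_eq_pt: "z = pt (z$1) (z$2)"
  by (simp add: vec_eq_iff forall_2)

section \<open>The dual Wulff shape as a polar body\<close>

lemma scaleR_mem_interior_convex:
  fixes S :: "'a::euclidean_space set"
  assumes "convex S" "0 \<in> interior S" "p \<in> closure S" "0 \<le> s" "s < 1"
  shows "s *\<^sub>R p \<in> interior S"
proof -
  have "p - (1 - s) *\<^sub>R (p - 0) \<in> interior S"
    using mem_interior_closure_convex_shrink[OF assms(1-3), of "1 - s"] assms(4,5) by simp
  then show ?thesis
    by (simp add: algebra_simps)
qed

lemma frontier_ray_unique:
  fixes S :: "'a::euclidean_space set"
  assumes "convex S" "0 \<in> interior S"
    and "0 < r" "r *\<^sub>R v \<in> frontier S" "0 < s" "s *\<^sub>R v \<in> frontier S"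
  shows "r = s"
proof -
  have "\<not> r < s" if "0 < r" "r *\<^sub>R v \<in> frontier S" "s *\<^sub>R v \<in> frontier S" for r s
  proof
    assume "r < s"
    then have "(r / s) *\<^sub>R (s *\<^sub>R v) \<in> interior S"
      using that by (intro scaleR_mem_interior_convex assms(1,2)) (auto simp: frontier_def)
    with \<open>r < s\<close> that show False
      by (simp add: frontier_def)
  qed
  then show ?thesis
    using assms by (meson linorder_neqE_linordered_idom)
qed

lemma radial_fun_frontier:
  assumes "compact S" "convex S" "0 \<in> interior S" "\<theta> \<noteq> 0"
  shows "radial_fun S \<theta> > 0" and "radial_fun S \<theta> *\<^sub>R \<theta> \<in> frontier S"
proof -
  obtain d where "0 < d" "d *\<^sub>R \<theta> \<in> frontier S"
    using ray_to_frontier[OF compact_imp_bounded[OF assms(1)] assms(3,4)] by auto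
  then have "\<exists>!r. r > 0 \<and> r *\<^sub>R \<theta> \<in> frontier S"
    using frontier_ray_unique[OF assms(2,3)] by blast
  from theI'[OF this] show "radial_fun S \<theta> > 0" "radial_fun S \<theta> *\<^sub>R \<theta> \<in> frontier S"
    unfolding radial_fun_def by blast+
qed

lemma norm_le_radial_fun:
  assumes "compact S" "convex S" "0 \<in> interior S" "p \<in> S" "p \<noteq> 0"
  shows "norm p \<le> radial_fun S (p /\<^sub>R norm p)"
proof (rule ccontr)
  define w where "w = radial_fun S (p /\<^sub>R norm p)"
  assume "\<not> norm p \<le> radial_fun S (p /\<^sub>R norm p)"
  then have "w < norm p"
    by (simp add: w_def)
  have "w > 0" and w_frontier: "w *\<^sub>R (p /\<^sub>R norm p) \<in> frontier S"
    using radial_fun_frontier[OF assms(1-3), of "p /\<^sub>R norm p"] assms(5) by (auto simp: w_def)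
  have "(w / norm p) *\<^sub>R p \<in> interior S"
    using \<open>w > 0\<close> \<open>w < norm p\<close> assms closure_subset
    by (intro scaleR_mem_interior_convex) auto
  moreover have "(w / norm p) *\<^sub>R p = w *\<^sub>R (p /\<^sub>R norm p)"
    by (simp add: divide_inverse)
  ultimately show False
    using w_frontier by (simp add: frontier_def)
qed

lemma dual_wulff_eq_polar:
  assumes "compact S" "convex S" "0 \<in> interior S"
  shows "dual_wulff S = {x. \<forall>p\<in>S. (- x) \<bullet> p \<le> 1}"
proof (intro set_eqI iffI CollectI ballI)
  fix x p
  assume x: "x \<in> dual_wulff S" and "p \<in> S"
  show "(- x) \<bullet> p \<le> 1"
  proof (cases "p = 0")
    case False
    define w where "w = radial_fun S (p /\<^sub>R norm p)"
    have "w > 0"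
      using radial_fun_frontier(1)[OF assms, of "p /\<^sub>R norm p"] False by (simp add: w_def)
    have "\<forall>\<theta>\<in>sphere 0 1. x \<bullet> \<theta> \<le> 1 / radial_fun S (- \<theta>)"
      using x by (simp add: dual_wulff_def wulff_shape_def)
    from bspec[OF this, of "- (p /\<^sub>R norm p)"] False
    have "x \<bullet> (- (p /\<^sub>R norm p)) \<le> 1 / w"
      by (simp add: w_def)
    then have "(- x) \<bullet> p \<le> norm p / w"
      using False by (simp add: field_simps)
    also have "\<dots> \<le> 1"
      using norm_le_radial_fun[OF assms \<open>p \<in> S\<close> False] \<open>w > 0\<close> by (simp add: w_def)
    finally show ?thesis .
  qed simp
next
  fix x
  assume x: "x \<in> {x. \<forall>p\<in>S. (- x) \<bullet> p \<le> 1}"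
  have "x \<bullet> \<theta> \<le> 1 / radial_fun S (- \<theta>)" if "norm \<theta> = 1" for \<theta>
  proof -
    define w where "w = radial_fun S (- \<theta>)"
    have "- \<theta> \<noteq> 0"
      using that by auto
    then have "w > 0" "w *\<^sub>R (- \<theta>) \<in> frontier S"
      unfolding w_def by (rule radial_fun_frontier[OF assms])+
    then have "w *\<^sub>R (- \<theta>) \<in> S"
      using frontier_subset_closed[OF compact_imp_closed[OF assms(1)]] by blast
    then have "w * (x \<bullet> \<theta>) \<le> 1"
      using x by force
    with \<open>w > 0\<close> show ?thesis
      by (simp add: field_simps w_def)
  qed
  then show "x \<in> dual_wulff S"
    by (simp add: dual_wulff_def wulff_shape_def)
qed

lemma ball_convex_hull_inner_le:
  fixes A :: "'a::real_inner set"
  shows "(\<forall>p\<in>convex hull A. x \<bullet> p \<le> c) \<longleftrightarrow> (\<forall>p\<in>A. x \<bullet> p \<le> c)"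
proof
  assume "\<forall>p\<in>A. x \<bullet> p \<le> c"
  then have "convex hull A \<subseteq> {p. x \<bullet> p \<le> c}"
    by (intro hull_minimal) (auto simp: convex_halfspace_le)
  then show "\<forall>p\<in>convex hull A. x \<bullet> p \<le> c"
    by blast
qed (meson hull_inc)

lemma dual_wulff_symmetric_convex_hull:
  assumes "finite A" "\<And>p. p \<in> A \<Longrightarrow> - p \<in> A" "0 \<in> interior (convex hull A)"
  shows "dual_wulff (convex hull A) = {x. \<forall>p\<in>A. x \<bullet> p \<le> 1}"
proof -
  have "dual_wulff (convex hull A) = {x. \<forall>p\<in>convex hull A. (- x) \<bullet> p \<le> 1}"
    using assms by (intro dual_wulff_eq_polar) (simp_all add: compact_convex_hull finite_imp_compact)
  also have "\<dots> = {x. \<forall>p\<in>A. (- x) \<bullet> p \<le> 1}"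
    by (simp only: ball_convex_hull_inner_le)
  also have "\<dots> = {x. \<forall>p\<in>A. x \<bullet> p \<le> 1}"
  proof (intro Collect_cong iffI ballI)
    fix x p
    assume "\<forall>p\<in>A. (- x) \<bullet> p \<le> 1" "p \<in> A"
    then have "(- x) \<bullet> (- p) \<le> 1"
      using assms(2) by blast
    then show "x \<bullet> p \<le> 1"
      by simp
  next
    fix x p
    assume "\<forall>p\<in>A. x \<bullet> p \<le> 1" "p \<in> A"
    then have "x \<bullet> (- p) \<le> 1"
      using assms(2) by blast
    then show "(- x) \<bullet> p \<le> 1"
      by simp
  qed
  finally show ?thesis .
qed

section \<open>Regular polygons\<close>

definition dir :: "real \<Rightarrow> real^2" where
  "dir \<theta> = pt (cos \<theta>) (sin \<theta>)"

lemma inner_dir: "dir \<alpha> \<bullet> dir \<beta> = cos (\<alpha> - \<beta>)"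
  by (simp add: dir_def inner_vec2 cos_diff)

lemma norm_dir [simp]: "norm (dir \<theta>) = 1"
  by (simp add: norm_eq_sqrt_inner inner_dir)

lemma scaleR_dir: "a *\<^sub>R dir \<theta> = pt (a * cos \<theta>) (a * sin \<theta>)"
  by (simp add: dir_def vec_eq_iff forall_2)

lemma dir_add_pi: "dir (\<theta> + pi) = - dir \<theta>"
  by (simp add: dir_def vec_eq_iff forall_2)

lemma dir_add_int_multiple: "dir (\<theta> + 2 * pi * of_int j) = dir \<theta>"
  by (simp add: dir_def cos_add sin_add)

lemma sin_scaleR_dir_add:
  "sin \<delta> *\<^sub>R dir (\<phi> + \<beta>) = sin (\<delta> - \<beta>) *\<^sub>R dir \<phi> + sin \<beta> *\<^sub>R dir (\<phi> + \<delta>)"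
  by (simp add: dir_def vec_eq_iff forall_2 sin_diff sin_add cos_add algebra_simps)

lemma polar_coordinates:
  fixes x :: "real^2"
  obtains r \<alpha> where "r \<ge> 0" "x = r *\<^sub>R dir \<alpha>"
proof (cases "x = 0")
  case False
  define r where "r = norm x"
  have "r > 0"
    using False by (simp add: r_def)
  have "(x$1 / r)\<^sup>2 + (x$2 / r)\<^sup>2 = (x \<bullet> x) / r\<^sup>2"
    by (simp add: inner_vec2 power_divide add_divide_distrib power2_eq_square)
  also have "\<dots> = 1"
    using \<open>r > 0\<close> by (simp add: r_def dot_square_norm)
  finally obtain \<alpha> where "x$1 / r = cos \<alpha>" "x$2 / r = sin \<alpha>"
    by (metis sincos_total_2pi)
  then have "x = r *\<^sub>R dir \<alpha>"
    using \<open>r > 0\<close> vec2_eq_pt[of x] by (simp add: dir_def vec_eq_iff forall_2 field_simps)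
  with \<open>r > 0\<close> show thesis
    by (intro that) auto
qed (use that in force)

text \<open>Vertices are indexed by integers and the index is only relevant modulo \<open>n\<close>,
  so that neighbouring and opposite vertices are simply \<open>k + 1\<close> and \<open>k + m\<close>.\<close>

definition polygon_vertex :: "nat \<Rightarrow> real \<Rightarrow> real \<Rightarrow> int \<Rightarrow> real^2" where
  "polygon_vertex n a t k = a *\<^sub>R dir (t + 2 * pi * of_int k / real n)"

lemma polygon_vertex_mod:
  assumes "n > 0"
  shows "polygon_vertex n a t k = polygon_vertex n a t (k mod int n)"
proof -
  have "real_of_int k = of_int (k mod int n) + real n * of_int (k div int n)"
    by (metis mult_div_mod_eq add.commute of_int_add of_int_mult of_int_of_nat_eq)
  then have angle: "t + 2 * pi * of_int k / real n
      = (t + 2 * pi * of_int (k mod int n) / real n) + 2 * pi * of_int (k div int n)"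
    using assms by (simp add: field_simps)
  show ?thesis
    unfolding polygon_vertex_def angle dir_add_int_multiple ..
qed

lemma polygon_vertex_add_half:
  assumes "m > 0"
  shows "polygon_vertex (2 * m) a t (k + int m) = - polygon_vertex (2 * m) a t k"
proof -
  have angle: "t + 2 * pi * of_int (k + int m) / real (2 * m) = (t + 2 * pi * of_int k / real (2 * m)) + pi"
    using assms by (simp add: field_simps)
  show ?thesis
    unfolding polygon_vertex_def angle dir_add_pi by simp
qed

lemma range_polygon_vertex:
  assumes "n > 0"
  shows "range (polygon_vertex n a t) = polygon_vertex n a t ` {0..<int n}"
proof (intro antisym subsetI)
  fix x
  assume "x \<in> range (polygon_vertex n a t)"
  then obtain k where "x = polygon_vertex n a t k"
    by blast
  then have "x = polygon_vertex n a t (k mod int n)"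
    using polygon_vertex_mod[OF assms, of a t k] by simp
  moreover have "k mod int n \<in> {0..<int n}"
    using assms by simp
  ultimately show "x \<in> polygon_vertex n a t ` {0..<int n}"
    by blast
qed auto

lemma regular_polygon_eq_convex_hull:
  assumes "n > 0"
  shows "regular_polygon n a t = convex hull (range (polygon_vertex n a t))"
proof -
  have "{pt (a * cos (t + 2 * pi * real k / real n)) (a * sin (t + 2 * pi * real k / real n)) | k. k < n}
      = polygon_vertex n a t ` int ` {0..<n}"
    by (auto simp: polygon_vertex_def scaleR_dir image_image)
  also have "\<dots> = range (polygon_vertex n a t)"
    using assms by (simp add: range_polygon_vertex image_int_atLeastLessThan)
  finally show ?thesis
    by (simp add: regular_polygon_def)
qed

lemma zero_mem_convex_hull_polygon_vertex:
  assumes "m > 0"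
  shows "0 \<in> convex hull (range (polygon_vertex (2 * m) a t))"
proof -
  let ?v = "polygon_vertex (2 * m) a t"
  have "(1/2) *\<^sub>R ?v 0 + (1/2) *\<^sub>R ?v (int m) \<in> convex hull (range ?v)"
    by (intro convexD[OF convex_convex_hull] hull_inc) auto
  then show ?thesis
    using polygon_vertex_add_half[OF assms, of a t 0] by simp
qed

lemma cos_odd_multiple_le:
  fixes d :: int
  assumes "n > 0"
  shows "cos ((2 * of_int d - 1) * pi / real n) \<le> cos (pi / real n)"
proof -
  define d' where "d' = d mod int n"
  have "real_of_int d = of_int d' + real n * of_int (d div int n)"
    by (metis d'_def mult_div_mod_eq add.commute of_int_add of_int_mult of_int_of_nat_eq)
  then have "(2 * of_int d - 1) * pi / real n = (2 * of_int d' - 1) * pi / real n + 2 * pi * of_int (d div int n)"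
    using assms by (simp add: field_simps)
  then have reduce: "cos ((2 * of_int d - 1) * pi / real n) = cos ((2 * of_int d' - 1) * pi / real n)"
    by (simp add: cos_add)
  have "0 \<le> pi / real n" "pi / real n \<le> pi"
    using assms by (simp_all add: field_simps)
  show ?thesis
  proof (cases "d' = 0")
    case False
    define y where "y = (2 * of_int d' - 1) * pi / real n"
    have "0 \<le> d'" "d' < int n"
      using assms by (simp_all add: d'_def)
    with False have "1 \<le> d'" "d' \<le> int n - 1"
      by linarith+
    then have "1 \<le> real_of_int d'" "real_of_int d' \<le> real n - 1"
      by linarith+
    then have "pi / real n \<le> y" "y \<le> 2 * pi - pi / real n"
      unfolding y_def using assms by (simp_all add: field_simps)
    have "cos y \<le> cos (pi / real n)"
    proof (cases "y \<le> pi")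
      case True
      then show ?thesis
        using cos_monotone_0_pi_le \<open>pi / real n \<le> y\<close> \<open>0 \<le> pi / real n\<close> by blast
    next
      case False
      have "cos y = cos (2 * pi - y)"
        by (simp add: cos_diff)
      also have "\<dots> \<le> cos (pi / real n)"
        using \<open>y \<le> 2 * pi - pi / real n\<close> \<open>0 \<le> pi / real n\<close> False
        by (intro cos_monotone_0_pi_le) linarith+
      finally show ?thesis .
    qed
    with reduce show ?thesis
      by (simp add: y_def)
  qed (use reduce in simp)
qed

lemma polygon_vertex_sector:
  fixes x :: "real^2"
  assumes "n > 2" "a > 0"
  obtains k \<mu> \<nu> where "0 \<le> \<mu>" "0 \<le> \<nu>"
    "x = \<mu> *\<^sub>R polygon_vertex n a t k + \<nu> *\<^sub>R polygon_vertex n a t (k + 1)"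
proof -
  obtain r \<alpha> where "r \<ge> 0" and x: "x = r *\<^sub>R dir \<alpha>"
    by (rule polar_coordinates)
  define \<delta> where "\<delta> = 2 * pi / real n"
  have "0 < \<delta>" "\<delta> < pi"
    using assms(1) by (simp_all add: \<delta>_def field_simps)
  then have "sin \<delta> > 0"
    by (rule sin_gt_zero)
  define k where "k = \<lfloor>(\<alpha> - t) / \<delta>\<rfloor>"
  define \<phi> where "\<phi> = t + of_int k * \<delta>"
  define \<beta> where "\<beta> = \<alpha> - \<phi>"
  have "of_int k \<le> (\<alpha> - t) / \<delta>" "(\<alpha> - t) / \<delta> < of_int k + 1"
    unfolding k_def by linarith+
  then have "of_int k * \<delta> \<le> \<alpha> - t" "\<alpha> - t < (of_int k + 1) * \<delta>"
    using \<open>0 < \<delta>\<close> by (simp_all add: pos_le_divide_eq pos_divide_less_eq)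
  then have "0 \<le> \<beta>" "\<beta> \<le> \<delta>"
    unfolding \<beta>_def \<phi>_def by (simp_all add: algebra_simps)
  define \<mu> where "\<mu> = r * sin (\<delta> - \<beta>) / (a * sin \<delta>)"
  define \<nu> where "\<nu> = r * sin \<beta> / (a * sin \<delta>)"
  have "x = (r / sin \<delta>) *\<^sub>R (sin \<delta> *\<^sub>R dir (\<phi> + \<beta>))"
    using x \<open>sin \<delta> > 0\<close> by (simp add: \<beta>_def)
  also have "\<dots> = (r / sin \<delta>) *\<^sub>R (sin (\<delta> - \<beta>) *\<^sub>R dir \<phi> + sin \<beta> *\<^sub>R dir (\<phi> + \<delta>))"
    by (simp only: sin_scaleR_dir_add[of \<delta> \<phi> \<beta>])
  also have "\<dots> = \<mu> *\<^sub>R (a *\<^sub>R dir \<phi>) + \<nu> *\<^sub>R (a *\<^sub>R dir (\<phi> + \<delta>))"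
  proof -
    have "r / sin \<delta> * sin (\<delta> - \<beta>) = \<mu> * a" "r / sin \<delta> * sin \<beta> = \<nu> * a"
      using assms(2) by (simp_all add: \<mu>_def \<nu>_def)
    then show ?thesis
      by (simp only: scaleR_add_right scaleR_scaleR)
  qed
  also have "a *\<^sub>R dir \<phi> = polygon_vertex n a t k"
    by (simp add: polygon_vertex_def \<phi>_def \<delta>_def ac_simps)
  also have "a *\<^sub>R dir (\<phi> + \<delta>) = polygon_vertex n a t (k + 1)"
    using assms(1) by (simp add: polygon_vertex_def \<phi>_def \<delta>_def field_simps)
  finally have x_eq: "x = \<mu> *\<^sub>R polygon_vertex n a t k + \<nu> *\<^sub>R polygon_vertex n a t (k + 1)" .
  have "sin (\<delta> - \<beta>) \<ge> 0" "sin \<beta> \<ge> 0"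
    using \<open>0 \<le> \<beta>\<close> \<open>\<beta> \<le> \<delta>\<close> \<open>\<delta> < pi\<close> by (simp_all add: sin_ge_zero)
  then have "\<mu> \<ge> 0" "\<nu> \<ge> 0"
    using \<open>r \<ge> 0\<close> \<open>sin \<delta> > 0\<close> assms(2) by (simp_all add: \<mu>_def \<nu>_def)
  then show thesis
    using x_eq by (rule that)
qed

lemma convex_scaleR_add_mem:
  assumes "convex S" "0 \<in> S" "x \<in> S" "y \<in> S" "0 \<le> \<mu>" "0 \<le> \<nu>" "\<mu> + \<nu> \<le> 1"
  shows "\<mu> *\<^sub>R x + \<nu> *\<^sub>R y \<in> S"
proof -
  have "\<mu> *\<^sub>R x + \<nu> *\<^sub>R y + (1 - \<mu> - \<nu>) *\<^sub>R 0 \<in> convex hull {x, y, 0}"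
    unfolding convex_hull_3
    by (rule CollectI, rule exI[of _ \<mu>], rule exI[of _ \<nu>], rule exI[of _ "1 - \<mu> - \<nu>"])
      (use assms(5-7) in auto)
  moreover have "convex hull {x, y, 0} \<subseteq> S"
    using assms(1-4) by (intro hull_minimal) auto
  ultimately show ?thesis
    by auto
qed

lemma cos_pi_div_pos:
  assumes "n > 2"
  shows "0 < cos (pi / real n)"
proof (rule cos_gt_zero_pi)
  show "pi / real n < pi / 2"
    using assms by (simp add: field_simps)
  have "0 < pi / real n"
    using assms by simp
  then show "- (pi / 2) < pi / real n"
    using pi_gt_zero by linarith
qed

lemma regular_polygon_eq_halfplanes:
  assumes "even n" "n > 2" "a > 0"
  shows "regular_polygon n a t
    = {x. \<forall>k::int. x \<bullet> dir (t + pi / real n + 2 * pi * of_int k / real n) \<le> a * cos (pi / real n)}"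
    (is "_ = ?H")
proof -
  obtain m where "n = 2 * m" "m > 0"
    using assms(1,2) by (auto elim!: evenE)
  let ?v = "polygon_vertex n a t"
  let ?N = "\<lambda>k::int. dir (t + pi / real n + 2 * pi * of_int k / real n)"
  have vertex_normal: "?v j \<bullet> ?N k = a * cos ((2 * of_int (j - k) - 1) * pi / real n)" for j k
  proof -
    have "(t + 2 * pi * of_int j / real n) - (t + pi / real n + 2 * pi * of_int k / real n)
        = (2 * of_int (j - k) - 1) * pi / real n"
      using assms(2) by (simp add: field_simps)
    then show ?thesis
      by (simp add: polygon_vertex_def inner_dir)
  qed
  have "convex hull (range ?v) \<subseteq> ?H"
  proof (rule hull_minimal)
    have "?v j \<bullet> ?N k \<le> a * cos (pi / real n)" for j k
      unfolding vertex_normal using assms(2,3) by (intro mult_left_mono cos_odd_multiple_le) auto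
    then show "range ?v \<subseteq> ?H"
      by auto
    have "?H = (\<Inter>k. {x. ?N k \<bullet> x \<le> a * cos (pi / real n)})"
      by (auto simp: inner_commute)
    then show "convex ?H"
      by (simp add: convex_INT convex_halfspace_le)
  qed
  moreover have "?H \<subseteq> convex hull (range ?v)"
  proof
    fix x
    assume "x \<in> ?H"
    obtain k \<mu> \<nu> where "0 \<le> \<mu>" "0 \<le> \<nu>" and x: "x = \<mu> *\<^sub>R ?v k + \<nu> *\<^sub>R ?v (k + 1)"
      by (rule polygon_vertex_sector[OF assms(2,3)])
    have "?v k \<bullet> ?N k = a * cos (pi / real n)" "?v (k + 1) \<bullet> ?N k = a * cos (pi / real n)"
      using vertex_normal[of k k] vertex_normal[of "k + 1" k] by simp_all
    then have "(\<mu> + \<nu>) * (a * cos (pi / real n)) = x \<bullet> ?N k"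
      by (simp add: x inner_add_left algebra_simps)
    also have "\<dots> \<le> a * cos (pi / real n)"
      using \<open>x \<in> ?H\<close> by simp
    finally have "\<mu> + \<nu> \<le> 1"
      using assms(2,3) cos_pi_div_pos by simp
    then show "x \<in> convex hull (range ?v)"
      unfolding x using \<open>0 \<le> \<mu>\<close> \<open>0 \<le> \<nu>\<close> zero_mem_convex_hull_polygon_vertex \<open>n = 2 * m\<close> \<open>m > 0\<close>
      by (intro convex_scaleR_add_mem) (auto intro: hull_inc)
  qed
  ultimately show ?thesis
    using assms(2) by (simp add: regular_polygon_eq_convex_hull)
qed

lemma ball_subset_regular_polygon:
  assumes "even n" "n > 2" "a > 0"
  shows "ball 0 (a * cos (pi / real n)) \<subseteq> regular_polygon n a t"
proof
  fix x :: "real^2"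
  assume "x \<in> ball 0 (a * cos (pi / real n))"
  then have "x \<bullet> dir \<theta> \<le> a * cos (pi / real n)" for \<theta>
    using norm_cauchy_schwarz[of x "dir \<theta>"] by simp
  then show "x \<in> regular_polygon n a t"
    by (simp add: regular_polygon_eq_halfplanes[OF assms])
qed

section \<open>Rotations\<close>

definition rotation :: "real \<Rightarrow> real^2 \<Rightarrow> real^2" where
  "rotation \<psi> z = pt (cos \<psi> * z$1 - sin \<psi> * z$2) (sin \<psi> * z$1 + cos \<psi> * z$2)"

lemma linear_rotation: "linear (rotation \<psi>)"
  by (rule linearI) (simp_all add: rotation_def pt_def vec_eq_iff forall_2 algebra_simps)

lemma norm_rotation: "norm (rotation \<psi> z) = norm z"
proof -
  have "rotation \<psi> z \<bullet> rotation \<psi> z = ((sin \<psi>)\<^sup>2 + (cos \<psi>)\<^sup>2) * (z$1 * z$1 + z$2 * z$2)"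
    unfolding rotation_def inner_vec2 pt_nth power2_eq_square by algebra
  then show ?thesis
    by (simp add: norm_eq_sqrt_inner inner_vec2)
qed

lemma dist_rotation: "dist (rotation \<psi> x) (rotation \<psi> y) = dist x y"
  using linear_diff[OF linear_rotation, of \<psi> x y, symmetric] by (simp add: dist_norm norm_rotation)

lemma rotation_polygon_vertex: "rotation \<psi> (polygon_vertex n a t k) = polygon_vertex n a (t + \<psi>) k"
  by (simp add: rotation_def polygon_vertex_def scaleR_dir vec_eq_iff forall_2 cos_add sin_add algebra_simps)

lemma rotation_regular_polygon:
  assumes "n > 0"
  shows "rotation \<psi> ` regular_polygon n a t = regular_polygon n a (t + \<psi>)"
  using assms by (simp add: regular_polygon_eq_convex_hull convex_hull_linear_image[OF linear_rotation]
      image_image rotation_polygon_vertex)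

section \<open>The dual of a regular \<open>2m\<close>-gon\<close>

lemma dual_wulff_regular_polygon_vertices:
  assumes "m \<ge> 2" "a > 0"
  shows "dual_wulff (regular_polygon (2 * m) a t) = {x. \<forall>k. x \<bullet> polygon_vertex (2 * m) a t k \<le> 1}"
proof -
  let ?v = "polygon_vertex (2 * m) a t"
  have "2 * m > 2" "even (2 * m)" "2 * m > 0"
    using assms(1) by simp_all
  have hull_eq: "regular_polygon (2 * m) a t = convex hull (range ?v)"
    by (rule regular_polygon_eq_convex_hull[OF \<open>2 * m > 0\<close>])
  have "finite (range ?v)"
    unfolding range_polygon_vertex[OF \<open>2 * m > 0\<close>] by simp
  moreover have "- p \<in> range ?v" if p: "p \<in> range ?v" for p
  proof -
    obtain k where "p = ?v k"
      using p by blast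
    then have "- p = ?v (k + int m)"
      using polygon_vertex_add_half[of m a t k] assms(1) by simp
    then show ?thesis
      by (rule range_eqI)
  qed
  moreover have "0 < a * cos (pi / real (2 * m))"
    using assms(2) cos_pi_div_pos[OF \<open>2 * m > 2\<close>] by (rule mult_pos_pos)
  then have "0 \<in> interior (regular_polygon (2 * m) a t)"
    using ball_subset_regular_polygon[OF \<open>even (2 * m)\<close> \<open>2 * m > 2\<close> assms(2)]
    unfolding mem_interior by blast
  ultimately have "dual_wulff (regular_polygon (2 * m) a t) = {x. \<forall>p\<in>range ?v. x \<bullet> p \<le> 1}"
    unfolding hull_eq by (rule dual_wulff_symmetric_convex_hull)
  then show ?thesis
    by simp
qed

lemma dual_wulff_regular_polygon:
  assumes "m \<ge> 2" "a > 0"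
  defines "n \<equiv> 2 * m"
  shows "dual_wulff (regular_polygon n a t)
    = regular_polygon n (1 / (a * cos (pi / real n))) (t + pi / real n)"
proof -
  define c where "c = cos (pi / real n)"
  have "n > 2" "even n"
    using assms(1) by (simp_all add: n_def)
  then have "c > 0"
    by (simp add: c_def cos_pi_div_pos)
  have angle: "t + pi / real n + pi / real n + 2 * pi * of_int k / real n = t + 2 * pi * of_int (k + 1) / real n"
    for k
    using \<open>n > 2\<close> by (simp add: field_simps)
  have "x \<bullet> polygon_vertex n a t k \<le> 1 \<longleftrightarrow> x \<bullet> dir (t + 2 * pi * of_int k / real n) \<le> 1 / (a * c) * c"
    for x k
    using assms(2) \<open>c > 0\<close> by (simp add: polygon_vertex_def field_simps)
  then have "dual_wulff (regular_polygon n a t)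
      = {x. \<forall>k. x \<bullet> dir (t + 2 * pi * of_int k / real n) \<le> 1 / (a * c) * c}"
    using dual_wulff_regular_polygon_vertices[OF assms(1,2)] by (simp add: n_def)
  also have "\<dots> = {x. \<forall>k. x \<bullet> dir (t + 2 * pi * of_int (k + 1) / real n) \<le> 1 / (a * c) * c}"
    by (metis diff_add_cancel)
  also have "\<dots> = {x. \<forall>k. x \<bullet> dir (t + pi / real n + pi / real n + 2 * pi * of_int k / real n) \<le> 1 / (a * c) * c}"
    by (simp only: angle)
  also have "\<dots> = regular_polygon n (1 / (a * c)) (t + pi / real n)"
    unfolding c_def using \<open>even n\<close> \<open>n > 2\<close> \<open>c > 0\<close> assms(2)
    by (intro regular_polygon_eq_halfplanes[symmetric]) (simp_all add: c_def)
  finally show ?thesis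
    by (simp add: c_def)
qed

lemma dual_wulff_regular_polygon_neq:
  assumes "m \<ge> 2" "a > 1"
  shows "dual_wulff (regular_polygon (2 * m) a t) \<noteq> regular_polygon (2 * m) a t"
proof
  let ?v = "polygon_vertex (2 * m) a t 0"
  assume "dual_wulff (regular_polygon (2 * m) a t) = regular_polygon (2 * m) a t"
  moreover have "?v \<in> regular_polygon (2 * m) a t"
    using assms(1) by (simp add: regular_polygon_eq_convex_hull hull_inc)
  ultimately have "?v \<bullet> ?v \<le> 1"
    using dual_wulff_regular_polygon_vertices[of m a t] assms by auto
  moreover have "?v \<bullet> ?v = a * a"
    by (simp add: polygon_vertex_def inner_dir)
  ultimately show False
    using assms(2) by (metis less_1_mult not_less)
qed

lemma congruent_regular_polygon_rotate:
  assumes "n > 0"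
  shows "congruent (regular_polygon n a (t + \<psi>)) (regular_polygon n a t)"
  unfolding congruent_def
proof (intro exI[of _ "rotation (- \<psi>)"] conjI allI)
  show "rotation (- \<psi>) ` regular_polygon n a (t + \<psi>) = regular_polygon n a t"
    using assms by (simp add: rotation_regular_polygon)
qed (rule dist_rotation)

lemma cos_pi_div_lt_one: "n > 0 \<Longrightarrow> cos (pi / real n) < 1"
  using cos_monotone_0_pi[of 0 "pi / real n"] by (simp add: field_simps)

theorem mainTheorem6:
  fixes m :: nat and a t0 :: real
  assumes "m \<ge> 2" and "a > 0"
    and "sin ((pi - 2 * pi / real (2 * m)) / 2) = 1 / a\<^sup>2"
  shows "dual_wulff (regular_polygon (2 * m) a t0) \<noteq> regular_polygon (2 * m) a t0
       \<and> congruent (dual_wulff (regular_polygon (2 * m) a t0)) (regular_polygon (2 * m) a t0)"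
proof -
  define n where "n = 2 * m"
  have "n > 2"
    using assms(1) by (simp add: n_def)
  have "cos (pi / real n) = sin (pi / 2 - pi / real n)"
    using cos_sin_eq[of "pi / real n"] by simp
  also have "pi / 2 - pi / real n = (pi - 2 * pi / real (2 * m)) / 2"
    by (simp add: n_def field_simps)
  finally have cos_eq: "cos (pi / real n) = 1 / a\<^sup>2"
    using assms(3) by simp
  moreover have "0 < cos (pi / real n)" "cos (pi / real n) < 1"
    using \<open>n > 2\<close> by (simp_all add: cos_pi_div_pos cos_pi_div_lt_one)
  ultimately have "1 < a\<^sup>2"
    by (simp add: field_simps)
  then have "a > 1"
    using power_less_imp_less_base[of 1 2 a] assms(2) by simp
  have "1 / (a * cos (pi / real n)) = a"
    using cos_eq assms(2) by (simp add: power2_eq_square)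
  then have "dual_wulff (regular_polygon n a t0) = regular_polygon n a (t0 + pi / real n)"
    using dual_wulff_regular_polygon[OF assms(1,2), of t0] by (simp add: n_def)
  then show ?thesis
    using dual_wulff_regular_polygon_neq[OF assms(1) \<open>a > 1\<close>, of t0]
      congruent_regular_polygon_rotate[of n a t0 "pi / real n"] \<open>n > 2\<close>
    by (simp add: n_def)
qed

end
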